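(* Consider a tiling of the sphere by $f>12$ angle congruent pentagons in which at most three distinct angle values occur at degree $3$ vertices. Then, after relabeling the distinct angle values, the complete set $S$ of angle combinations at degree $3$ vertices and the pentagon $P$ (multiset of the five angles of a tile) form one of the following pairs: - $S=\{\alpha^3\}$: $P=\alpha^4\beta$; - $S=\{\alpha\beta^2\}$: $P=\alpha^2\beta^3$ or $\alpha^3\beta^2$, or $P=\alpha^2\beta^2\gamma$; - $S=\{\alpha\beta\gamma,\alpha^3\}$: $P=\alpha^3\beta\gamma$ or $\alpha^2\beta^2\gamma$, or $P=\alpha^2\beta\gamma\delta$; - $S=\{\alpha\beta^2,\alpha^2\gamma\}$: $P=\alpha^3\beta\gamma$, $\alpha^2\beta^2\gamma$ or $\alpha^2\beta\gamma^2$, or $P=\alpha^2\beta\gamma\delta$; - $S=\{\alpha\beta^2,\gamma^3\}$: $P=\alpha^2\beta^2\gamma$, $\alpha^2\beta\gamma^2$, $\alpha\beta^3\gamma$, $\alpha\beta^2\gamma^2$ or $\alpha\beta\gamma^3$, or $P=\alpha\beta^2\gamma\delta$ or $\alpha\beta\gamma^2\delta$. In each case, the angle values named are pairwise distinct, and in the listed pentagons the last angle letter not occurring in $S$ (namely $\beta$ in the first case, $\gamma$ in $\alpha^2\beta^2\gamma$ of the second case, and $\delta$ in the others) denotes an angle value that appears at no degree $3$ vertex; all other letters are exactly the values occurring in $S$.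
   Context: A spherical tiling by angle congruent pentagons is a graph embedded in the sphere whose faces (tiles) are all pentagons, edge-to-edge with every vertex of degree at least $3$; each corner carries a positive real angle, the angles at each vertex sum to $2\pi$, and every tile has the same multiset of five angles. Multiplicative notation is used for multisets: e.g. $\alpha\beta^2$ is a degree $3$ vertex with corner angles $\alpha,\beta,\beta$, and $\alpha^2\beta\gamma\delta$ is a pentagon with angles $\alpha,\alpha,\beta,\gamma,\delta$. $f$ is the number of tiles. *)

theory Defs
  imports Complex_Main "HOL-Library.Multiset" "HOL-Combinatorics.Permutations"
begin

text \<open>Combinatorial maps: a finite set of darts D, a vertex rotation sg and a
fixed-point-free edge involution ep (both permutations of D).  Each dart corresponds to exactly one corner, i.e. one
incidence of a vertex (its sg-orbit) with a face (its phi-orbit).\<close>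

definition orb :: "('d \<Rightarrow> 'd) \<Rightarrow> 'd \<Rightarrow> 'd set" where
  "orb f d = {(f ^^ n) d | n. True}"

definition map_vertices :: "'d set \<Rightarrow> ('d \<Rightarrow> 'd) \<Rightarrow> 'd set set" where
  "map_vertices D sg = orb sg ` D"

definition map_edges :: "'d set \<Rightarrow> ('d \<Rightarrow> 'd) \<Rightarrow> 'd set set" where
  "map_edges D ep = orb ep ` D"

definition map_faces :: "'d set \<Rightarrow> ('d \<Rightarrow> 'd) \<Rightarrow> ('d \<Rightarrow> 'd) \<Rightarrow> 'd set set" where
  "map_faces D sg ep = orb (sg \<circ> ep) ` D"

text \<open>A tiling of the sphere by pentagons (edge-to-edge, all vertices of degree at
least 3): a connected combinatorial map of genus 0 (Euler characteristic 2) whose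
faces all have 5 corners at 5 distinct vertices.\<close>

definition sphere_pentagon_tiling :: "'d set \<Rightarrow> ('d \<Rightarrow> 'd) \<Rightarrow> ('d \<Rightarrow> 'd) \<Rightarrow> bool" where
  "sphere_pentagon_tiling D sg ep \<longleftrightarrow>
     finite D \<and> D \<noteq> {} \<and> sg permutes D \<and> ep permutes D \<and>
     (\<forall>d\<in>D. ep d \<noteq> d \<and> ep (ep d) = d) \<and>
     (\<forall>x\<in>D. \<forall>y\<in>D. (x, y) \<in> ({(z, sg z) | z. z \<in> D} \<union> {(z, ep z) | z. z \<in> D})\<^sup>*) \<and>
     int (card (map_vertices D sg)) - int (card (map_edges D ep)) + int (card (map_faces D sg ep)) = 2 \<and>
     (\<forall>d\<in>D. card (orb sg d) \<ge> 3) \<and>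
     (\<forall>d\<in>D. card (orb (sg \<circ> ep) d) = 5 \<and> inj_on (orb sg) (orb (sg \<circ> ep) d))"

definition angle_congruent ::
  "'d set \<Rightarrow> ('d \<Rightarrow> 'd) \<Rightarrow> ('d \<Rightarrow> 'd) \<Rightarrow> ('d \<Rightarrow> real) \<Rightarrow> real multiset \<Rightarrow> bool" where
  "angle_congruent D sg ep th P \<longleftrightarrow>
     sphere_pentagon_tiling D sg ep \<and>
     (\<forall>d\<in>D. th d > 0) \<and>
     (\<forall>v\<in>map_vertices D sg. (\<Sum>d\<in>v. th d) = 2 * pi) \<and>
     (\<forall>F\<in>map_faces D sg ep. image_mset th (mset_set F) = P)"

definition deg3_combos :: "'d set \<Rightarrow> ('d \<Rightarrow> 'd) \<Rightarrow> ('d \<Rightarrow> real) \<Rightarrow> real multiset set" where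
  "deg3_combos D sg th =
     (\<lambda>v. image_mset th (mset_set v)) ` {v \<in> map_vertices D sg. card v = 3}"

end

theory Submission
  imports Defs "HOL-Combinatorics.Orbits"
begin

text \<open>Counting darts, Euler's formula gives \<open>2v = 3f + 4\<close> and at least \<open>f + 8\<close> vertices of
degree 3, and the angle sum of a tile is \<open>3\<pi> + 4\<pi>/f\<close>. Every tile carries each angle value \<open>x\<close>
exactly as often as \<open>P\<close> does, so over all degree 3 vertices \<open>x\<close> occurs at most \<open>f\<close> times its
multiplicity in \<open>P\<close>; since there are more than \<open>f\<close> such vertices, any weighting of the angle
values under which every degree 3 vertex has weight at least 1 gives \<open>P\<close> weight greater than 1.

Independently, degree 3 vertex types all have angle sum \<open>2\<pi>\<close> and use at most three values, which
leaves six possible sets \<open>S\<close>. The weight bounds exclude \<open>S = {\<alpha>\<beta>\<gamma>}\<close> and determine four of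
the five angles of \<open>P\<close> in the other cases; the fifth angle is free, except that \<open>P = \<alpha>\<^sup>5\<close>
for \<open>S = {\<alpha>\<^sup>3}\<close> would force \<open>f = 12\<close>.\<close>

section \<open>Vertex types of degree 3\<close>

lemma size_3_mset_cases:
  assumes "size M = 3"
  obtains (distinct) x y z where "distinct [x, y, z]" "M = {#x, y, z#}"
    | (repeated) u v where "M = {#u, u, v#}"
proof -
  obtain x M' where "M = add_mset x M'" "size M' = 2"
    using assms size_eq_Suc_imp_eq_union[of M 2] by auto
  moreover obtain y M'' where "M' = add_mset y M''" "size M'' = 1"
    using \<open>size M' = 2\<close> size_eq_Suc_imp_eq_union[of M' 1] by auto
  moreover obtain z where "M'' = {#z#}"
    using \<open>size M'' = 1\<close> size_1_singleton_mset by auto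
  ultimately have M: "M = {#x, y, z#}" by simp
  consider "distinct [x, y, z]" | "x = y" | "x = z" | "y = z" by auto
  then show thesis
  proof cases
    case 1
    with M show thesis by (intro distinct)
  next
    case 2
    with M show thesis by (intro repeated[of x z]) simp
  next
    case 3
    with M show thesis by (intro repeated[of x y]) (simp add: add_mset_commute)
  next
    case 4
    with M show thesis by (intro repeated[of y x]) (simp add: add_mset_commute)
  qed
qed

lemma obtain_add_mset_if_subseteq:
  assumes "Q \<subseteq># P" "size P = Suc (size Q)"
  obtains d where "P = add_mset d Q"
proof -
  have "size (P - Q) = 1" using size_Diff_submset[OF assms(1)] assms(2) by simp
  then obtain d where "P - Q = {#d#}" using size_1_singleton_mset by blast
  then show thesis using assms(1) by (metis add_mset_add_single subset_mset.add_diff_inverse that)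
qed

lemma subseteq_mset_size_eq_imp_eq: "Q \<subseteq># P \<Longrightarrow> size P = size Q \<Longrightarrow> P = Q"
  by (metis mset_subset_size subset_mset.le_less less_irrefl)

locale three_valued_combos =
  fixes S :: "'a::linordered_field multiset set" and s :: 'a
  assumes finite_combos: "finite S"
    and combos_nonempty: "S \<noteq> {}"
    and size_combo: "M \<in> S \<Longrightarrow> size M = 3"
    and sum_combo: "M \<in> S \<Longrightarrow> sum_mset M = s"
    and card_combo_values: "card (\<Union>M\<in>S. set_mset M) \<le> 3"
begin

definition combo_values :: "'a set" where
  "combo_values = (\<Union>M\<in>S. set_mset M)"

lemma mem_combo_values: "M \<in> S \<Longrightarrow> x \<in># M \<Longrightarrow> x \<in> combo_values"
  unfolding combo_values_def by blast

lemma combo_values_eq: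
  assumes "distinct [x, y, z]" "{x, y, z} \<subseteq> combo_values"
  shows "combo_values = {x, y, z}"
proof -
  have finite: "finite combo_values" unfolding combo_values_def using finite_combos by blast
  have "card combo_values \<le> card {x, y, z}"
    using card_combo_values assms(1) unfolding combo_values_def by simp
  then have "{x, y, z} = combo_values"
    using card_subset_eq[OF finite assms(2)] card_mono[OF finite assms(2)] by linarith
  then show ?thesis ..
qed

lemma sum_triple_combo: "{#x, y, z#} \<in> S \<Longrightarrow> x + y + z = s"
  using sum_combo[of "{#x, y, z#}"] by (simp add: add.assoc)

lemma cube_combo_unique: "{#u, u, u#} \<in> S \<Longrightarrow> {#w, w, w#} \<in> S \<Longrightarrow> u = w"
  using sum_triple_combo[of u u u] sum_triple_combo[of w w w] by simp

lemma combos_with_distinct_triple: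
  assumes xyz: "{#x, y, z#} \<in> S" and distinct: "distinct [x, y, z]"
  shows "S = {{#x, y, z#}} \<or> S = {{#x, y, z#}, {#x, x, x#}} \<or>
    S = {{#x, y, z#}, {#y, y, y#}} \<or> S = {{#x, y, z#}, {#z, z, z#}}"
proof -
  have xyz_values: "combo_values = {x, y, z}"
    using combo_values_eq[OF distinct] mem_combo_values[OF xyz] by auto
  have S: "S \<subseteq> {{#x, y, z#}, {#x, x, x#}, {#y, y, y#}, {#z, z, z#}}"
  proof
    fix M assume "M \<in> S"
    obtain p q r where M: "M = {#p, q, r#}"
      using size_combo[OF \<open>M \<in> S\<close>] by (cases rule: size_3_mset_cases) auto
    have "p + q + r = x + y + z"
      using sum_triple_combo \<open>M \<in> S\<close> M xyz by simp
    moreover have "p \<in> {x, y, z}" "q \<in> {x, y, z}" "r \<in> {x, y, z}"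
      using mem_combo_values[OF \<open>M \<in> S\<close>] M xyz_values by auto
    ultimately show "M \<in> {{#x, y, z#}, {#x, x, x#}, {#y, y, y#}, {#z, z, z#}}"
      using distinct M by (auto simp: add_mset_commute)
  qed
  consider "{#x, x, x#} \<in> S" | "{#y, y, y#} \<in> S" | "{#z, z, z#} \<in> S"
    | "S \<subseteq> {{#x, y, z#}}" using S by blast
  then show ?thesis
  proof cases
    case 1
    then have "{#y, y, y#} \<notin> S" "{#z, z, z#} \<notin> S" using cube_combo_unique distinct by auto
    then show ?thesis using S xyz 1 by blast
  next
    case 2
    then have "{#x, x, x#} \<notin> S" "{#z, z, z#} \<notin> S" using cube_combo_unique distinct by auto
    then show ?thesis using S xyz 2 by blast
  next
    case 3
    then have "{#x, x, x#} \<notin> S" "{#y, y, y#} \<notin> S" using cube_combo_unique distinct by auto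
    then show ?thesis using S xyz 3 by blast
  qed (use xyz in blast)
qed

lemma combos_with_cube:
  assumes cube: "{#t, t, t#} \<in> S" and repeated: "\<And>M. M \<in> S \<Longrightarrow> \<exists>u v. M = {#u, u, v#}"
  shows "S = {{#t, t, t#}} \<or> (\<exists>a b. distinct [a, b, t] \<and> S = {{#a, b, b#}, {#t, t, t#}})"
proof (cases "S = {{#t, t, t#}}")
  case False
  have avoid_t: "u \<noteq> t \<and> v \<noteq> t" if "{#u, u, v#} \<in> S" "u \<noteq> v" for u v
    using sum_triple_combo[OF that(1)] sum_triple_combo[OF cube] that(2) by auto
  obtain M where "M \<in> S" "M \<noteq> {#t, t, t#}" using False cube by blast
  then obtain u v where uv: "{#u, u, v#} \<in> S" "u \<noteq> v"
    using repeated cube_combo_unique cube by metis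
  then have distinct: "distinct [u, v, t]" using avoid_t by auto
  have uvt_values: "combo_values = {u, v, t}"
    using combo_values_eq[OF distinct] mem_combo_values[OF uv(1)] mem_combo_values[OF cube] by auto
  have "M \<in> {{#u, u, v#}, {#t, t, t#}}" if "M \<in> S" for M
  proof -
    obtain u' v' where M: "M = {#u', u', v'#}" using repeated[OF \<open>M \<in> S\<close>] by blast
    show ?thesis
    proof (cases "u' = v'")
      case True
      then show ?thesis using cube_combo_unique[OF _ cube] \<open>M \<in> S\<close> M by auto
    next
      case False
      then have "u' \<in> {u, v}" "v' \<in> {u, v}"
        using avoid_t[of u' v'] mem_combo_values[OF \<open>M \<in> S\<close>] M uvt_values \<open>M \<in> S\<close> by auto
      moreover have "u' + u' + v' = u + u + v"
        using sum_triple_combo \<open>M \<in> S\<close> M uv(1) by metis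
      ultimately show ?thesis using False M uv(2) by auto
    qed
  qed
  then have "S = {{#v, u, u#}, {#t, t, t#}}"
    using uv(1) cube by (auto simp: add_mset_commute)
  moreover have "distinct [v, u, t]" using distinct by auto
  ultimately show ?thesis by blast
qed simp

lemma chain_of_two_combos:
  assumes xy: "{#x, x, y#} \<in> S" "x \<noteq> y" and xy': "{#x', x', y'#} \<in> S" "x' \<noteq> y'"
    and different: "{#x, x, y#} \<noteq> {#x', x', y'#}"
  obtains p q r where "distinct [p, q, r]" "{#p, p, q#} \<in> S" "{#q, q, r#} \<in> S"
proof -
  have sums: "x + x + y = x' + x' + y'"
    using sum_triple_combo[OF xy(1)] sum_triple_combo[OF xy'(1)] by simp
  have "x' \<noteq> x" using sums different by auto
  show thesis
  proof (cases "x' = y")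
    case True
    then have "distinct [x, y, y']" using sums xy(2) xy'(2) by auto
    with xy(1) xy'(1) True show thesis by (intro that[of x y y']) auto
  next
    case False
    then have "combo_values = {x, y, x'}"
      using combo_values_eq mem_combo_values[OF xy(1)] mem_combo_values[OF xy'(1)]
        \<open>x' \<noteq> x\<close> xy(2) by auto
    then have "y' \<in> {x, y, x'}" using mem_combo_values[OF xy'(1)] by simp
    moreover have "y' \<noteq> y" using sums \<open>x' \<noteq> x\<close> by auto
    ultimately have "y' = x" using xy'(2) by blast
    with xy(1) xy'(1) False \<open>x' \<noteq> x\<close> xy(2) show thesis by (intro that[of x' x y]) auto
  qed
qed

lemma combos_of_chain:
  assumes pq: "{#p, p, q#} \<in> S" and qr: "{#q, q, r#} \<in> S" and distinct: "distinct [p, q, r]"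
    and repeated: "\<And>M. M \<in> S \<Longrightarrow> \<exists>u v. u \<noteq> v \<and> M = {#u, u, v#}"
  shows "S = {{#p, p, q#}, {#q, q, r#}}"
proof -
  have pqr_values: "combo_values = {p, q, r}"
    using combo_values_eq[OF distinct] mem_combo_values[OF pq] mem_combo_values[OF qr] by auto
  have "M \<in> {{#p, p, q#}, {#q, q, r#}}" if M_in: "M \<in> S" for M
  proof -
    obtain u v where M: "u \<noteq> v" "M = {#u, u, v#}" using repeated[OF M_in] by blast
    have "u \<in> {p, q, r}" "v \<in> {p, q, r}"
      using mem_combo_values[OF M_in] M pqr_values by auto
    moreover have "u + u + v = p + p + q" "u + u + v = q + q + r"
      using sum_triple_combo M_in M pq qr by metis+
    ultimately show ?thesis using M distinct by auto
  qed
  then show ?thesis using pq qr by blast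
qed

lemma combos_cases:
  obtains (aaa) a where "S = {{#a, a, a#}}"
    | (abb) a b where "a \<noteq> b" "S = {{#a, b, b#}}"
    | (abc) a b c where "distinct [a, b, c]" "S = {{#a, b, c#}}"
    | (abc_aaa) a b c where "distinct [a, b, c]" "S = {{#a, b, c#}, {#a, a, a#}}"
    | (abb_aac) a b c where "distinct [a, b, c]" "S = {{#a, b, b#}, {#a, a, c#}}"
    | (abb_ccc) a b c where "distinct [a, b, c]" "S = {{#a, b, b#}, {#c, c, c#}}"
proof (cases "\<exists>x y z. distinct [x, y, z] \<and> {#x, y, z#} \<in> S")
  case True
  then obtain x y z where xyz: "distinct [x, y, z]" "{#x, y, z#} \<in> S" by blast
  have yxz: "{#y, x, z#} = {#x, y, z#}" "distinct [y, x, z]"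
    and zxy: "{#z, x, y#} = {#x, y, z#}" "distinct [z, x, y]"
    using xyz(1) by (auto simp: add_mset_commute)
  from combos_with_distinct_triple[OF xyz(2,1)] show thesis
  proof (elim disjE)
    assume "S = {{#x, y, z#}, {#y, y, y#}}"
    then show thesis using abc_aaa[of y x z] yxz by simp
  next
    assume "S = {{#x, y, z#}, {#z, z, z#}}"
    then show thesis using abc_aaa[of z x y] zxy by simp
  qed (use abc[OF xyz(1)] abc_aaa[OF xyz(1)] in auto)
next
  case False
  have repeated: "\<exists>u v. M = {#u, u, v#}" if "M \<in> S" for M
    using size_combo[OF that] by (cases rule: size_3_mset_cases) (use False that in blast)+
  show thesis
  proof (cases "\<exists>t. {#t, t, t#} \<in> S")
    case True
    then obtain t where "{#t, t, t#} \<in> S" by blast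
    then have "S = {{#t, t, t#}} \<or> (\<exists>a b. distinct [a, b, t] \<and> S = {{#a, b, b#}, {#t, t, t#}})"
      using repeated by (rule combos_with_cube)
    then show thesis by (elim disjE exE conjE) (erule aaa, erule (1) abb_ccc)
  next
    case False
    have repeated': "\<exists>u v. u \<noteq> v \<and> M = {#u, u, v#}" if M_in: "M \<in> S" for M
    proof -
      obtain u v where "M = {#u, u, v#}" using repeated[OF M_in] by blast
      moreover have "u \<noteq> v" using False M_in calculation by auto
      ultimately show ?thesis by blast
    qed
    obtain M where "M \<in> S" using combos_nonempty by blast
    then obtain x y where xy: "{#x, x, y#} \<in> S" "x \<noteq> y" using repeated' by blast
    show thesis
    proof (cases "S = {{#x, x, y#}}")
      case True
      then have "S = {{#y, x, x#}}" by (simp add: add_mset_commute)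
      then show thesis using abb[of y x] xy(2) by simp
    next
      case False
      then obtain M' where "M' \<in> S" "M' \<noteq> {#x, x, y#}" using xy(1) by blast
      then obtain x' y' where xy': "{#x', x', y'#} \<in> S" "x' \<noteq> y'" "{#x, x, y#} \<noteq> {#x', x', y'#}"
        using repeated'[OF \<open>M' \<in> S\<close>] by auto
      obtain p q r where pqr: "distinct [p, q, r]" "{#p, p, q#} \<in> S" "{#q, q, r#} \<in> S"
        using chain_of_two_combos[OF xy xy'] .
      have "distinct [q, p, r]" using pqr(1) by auto
      moreover have "S = {{#q, p, p#}, {#q, q, r#}}"
        using combos_of_chain[OF pqr(2,3,1) repeated'] by (simp add: add_mset_commute)
      ultimately show thesis by (rule abb_aac)
    qed
  qed
qed

end

section \<open>The listed vertex types and tiles\<close>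

definition tiling_classification :: "real multiset set \<Rightarrow> real multiset \<Rightarrow> bool" where
  "tiling_classification S P \<longleftrightarrow> (\<exists>a b c d :: real. distinct [a, b, c, d] \<and>
      ((S = {{#a, a, a#}} \<and> P = {#a, a, a, a, b#}) \<or>
      (S = {{#a, b, b#}} \<and>
         (P = {#a, a, b, b, b#} \<or> P = {#a, a, a, b, b#} \<or> P = {#a, a, b, b, c#})) \<or>
      (S = {{#a, b, c#}, {#a, a, a#}} \<and>
         (P = {#a, a, a, b, c#} \<or> P = {#a, a, b, b, c#} \<or> P = {#a, a, b, c, d#})) \<or>
      (S = {{#a, b, b#}, {#a, a, c#}} \<and>
         (P = {#a, a, a, b, c#} \<or> P = {#a, a, b, b, c#} \<or> P = {#a, a, b, c, c#} \<or>
          P = {#a, a, b, c, d#})) \<or>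
      (S = {{#a, b, b#}, {#c, c, c#}} \<and>
         (P = {#a, a, b, b, c#} \<or> P = {#a, a, b, c, c#} \<or> P = {#a, b, b, b, c#} \<or>
          P = {#a, b, b, c, c#} \<or> P = {#a, b, c, c, c#} \<or>
          P = {#a, b, b, c, d#} \<or> P = {#a, b, c, c, d#}))))"

lemma obtain_fresh_real:
  fixes A :: "real set"
  assumes "finite A"
  obtains x where "x \<notin> A"
  using ex_new_if_finite[OF infinite_UNIV_char_0 assms] by blast

lemma classification_aaaI:
  "distinct [a, b, c, d] \<Longrightarrow> S = {{#a, a, a#}} \<Longrightarrow> P = {#a, a, a, a, b#} \<Longrightarrow>
   tiling_classification S P"
  unfolding tiling_classification_def by blast

lemma classification_abbI:
  "distinct [a, b, c, d] \<Longrightarrow> S = {{#a, b, b#}} \<Longrightarrow> P = {#a, a, b, b, b#} \<Longrightarrow>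
   tiling_classification S P"
  unfolding tiling_classification_def by blast

lemma classification_abc_aaaI:
  "distinct [a, b, c, d] \<Longrightarrow> S = {{#a, b, c#}, {#a, a, a#}} \<Longrightarrow>
   P = {#a, a, a, b, c#} \<or> P = {#a, a, b, b, c#} \<or> P = {#a, a, b, c, d#} \<Longrightarrow>
   tiling_classification S P"
  unfolding tiling_classification_def by blast

lemma classification_abb_aacI:
  "distinct [a, b, c, d] \<Longrightarrow> S = {{#a, b, b#}, {#a, a, c#}} \<Longrightarrow>
   P = {#a, a, a, b, c#} \<or> P = {#a, a, b, b, c#} \<or> P = {#a, a, b, c, c#} \<or> P = {#a, a, b, c, d#}
   \<Longrightarrow> tiling_classification S P"
  unfolding tiling_classification_def by blast

lemma classification_abb_cccI:
  "distinct [a, b, c, d] \<Longrightarrow> S = {{#a, b, b#}, {#c, c, c#}} \<Longrightarrow>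
   P = {#a, a, b, b, c#} \<or> P = {#a, a, b, c, c#} \<or> P = {#a, b, b, b, c#} \<or>
   P = {#a, b, b, c, c#} \<or> P = {#a, b, c, c, c#} \<or> P = {#a, b, b, c, d#} \<or> P = {#a, b, c, c, d#}
   \<Longrightarrow> tiling_classification S P"
  unfolding tiling_classification_def by blast

lemma classification_aaa:
  assumes "S = {{#a, a, a#}}" "d \<noteq> a" "P = add_mset d {#a, a, a, a#}"
  shows "tiling_classification S P"
proof -
  obtain e where "e \<notin> {a, d}" by (rule obtain_fresh_real[of "{a, d}"]) auto
  moreover obtain e' where "e' \<notin> {a, d, e}" by (rule obtain_fresh_real[of "{a, d, e}"]) auto
  ultimately have "distinct [a, d, e, e']" using assms(2) by auto
  then show ?thesis by (rule classification_aaaI) (use assms in \<open>simp_all add: add_mset_commute\<close>)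
qed

lemma classification_abb:
  assumes "S = {{#a, b, b#}}" "a \<noteq> b" "P = {#a, a, b, b, b#}"
  shows "tiling_classification S P"
proof -
  obtain e where "e \<notin> {a, b}" by (rule obtain_fresh_real[of "{a, b}"]) auto
  moreover obtain e' where "e' \<notin> {a, b, e}" by (rule obtain_fresh_real[of "{a, b, e}"]) auto
  ultimately have "distinct [a, b, e, e']" using assms(2) by auto
  then show ?thesis using assms(1,3) by (rule classification_abbI)
qed

lemma classification_abc_aaa:
  assumes "S = {{#a, b, c#}, {#a, a, a#}}" "distinct [a, b, c]" "P = add_mset d {#a, a, b, c#}"
  shows "tiling_classification S P"
proof -
  obtain e where e: "e \<notin> {a, b, c}" by (rule obtain_fresh_real[of "{a, b, c}"]) auto
  consider "d \<in> {a, b}" | "d = c" | "d \<notin> {a, b, c}" by blast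
  then show ?thesis
  proof cases
    case 1
    have "distinct [a, b, c, e]" using e assms(2) by auto
    then show ?thesis
      by (rule classification_abc_aaaI) (use 1 assms in \<open>auto simp: add_mset_commute\<close>)
  next
    case 2
    have "distinct [a, c, b, e]" using e assms(2) by auto
    then show ?thesis
      by (rule classification_abc_aaaI) (use 2 assms in \<open>auto simp: add_mset_commute\<close>)
  next
    case 3
    then have "distinct [a, b, c, d]" using assms(2) by auto
    then show ?thesis
      by (rule classification_abc_aaaI) (use assms in \<open>auto simp: add_mset_commute\<close>)
  qed
qed

lemma classification_abb_aac:
  assumes "S = {{#a, b, b#}, {#a, a, c#}}" "distinct [a, b, c]" "P = add_mset d {#a, a, b, c#}"
  shows "tiling_classification S P"
proof (cases "d \<in> {a, b, c}")
  case True
  obtain e where "e \<notin> {a, b, c}" by (rule obtain_fresh_real[of "{a, b, c}"]) auto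
  then have "distinct [a, b, c, e]" using assms(2) by auto
  then show ?thesis
    by (rule classification_abb_aacI) (use True assms in \<open>auto simp: add_mset_commute\<close>)
next
  case False
  then have "distinct [a, b, c, d]" using assms(2) by auto
  then show ?thesis
    by (rule classification_abb_aacI) (use assms in \<open>auto simp: add_mset_commute\<close>)
qed

lemma classification_abb_ccc:
  assumes "S = {{#a, b, b#}, {#c, c, c#}}" "distinct [a, b, c]"
    and "P = add_mset d {#a, b, b, c#} \<or> P = add_mset d {#a, b, c, c#}"
  shows "tiling_classification S P"
proof (cases "d \<in> {a, b, c}")
  case True
  obtain e where "e \<notin> {a, b, c}" by (rule obtain_fresh_real[of "{a, b, c}"]) auto
  then have "distinct [a, b, c, e]" using assms(2) by auto
  then show ?thesis
    by (rule classification_abb_cccI) (use True assms in \<open>auto simp: add_mset_commute\<close>)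
next
  case False
  then have "distinct [a, b, c, d]" using assms(2) by auto
  then show ?thesis
    by (rule classification_abb_cccI) (use assms in \<open>auto simp: add_mset_commute\<close>)
qed

section \<open>Counting angles at degree 3 vertices\<close>

text \<open>\<open>W\<close> stands for the degree 3 vertices, \<open>m w\<close> for the angles at \<open>w\<close> and \<open>f\<close> for the
number of tiles.\<close>

locale deg3_counting = three_valued_combos S "2 * pi" for S :: "real multiset set" +
  fixes W :: "'w set" and m :: "'w \<Rightarrow> real multiset" and P :: "real multiset" and f :: real
  assumes combos_eq: "S = m ` W"
    and finite_W: "finite W"
    and f_gt_12: "12 < f"
    and f_lt_card_W: "f < real (card W)"
    and count_combos_le: "\<And>x. (\<Sum>w\<in>W. real (count (m w) x)) \<le> real (count P x) * f"
    and size_P: "size P = 5"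
    and sum_P: "sum_mset P = 3 * pi + 4 * pi / f"
begin

lemma weighted_count_P_gt_1:
  assumes "finite A" "\<And>x. x \<in> A \<Longrightarrow> 0 \<le> c x"
    and "\<And>M. M \<in> S \<Longrightarrow> 1 \<le> (\<Sum>x\<in>A. c x * real (count M x))"
  shows "1 < (\<Sum>x\<in>A. c x * real (count P x))"
proof (rule ccontr)
  assume not_gt: "\<not> ?thesis"
  have "real (card W) = (\<Sum>w\<in>W. 1)" by simp
  also have "\<dots> \<le> (\<Sum>w\<in>W. \<Sum>x\<in>A. c x * real (count (m w) x))"
    by (rule sum_mono) (use assms(3) combos_eq in blast)
  also have "\<dots> = (\<Sum>x\<in>A. c x * (\<Sum>w\<in>W. real (count (m w) x)))"
    by (subst sum.swap) (simp add: sum_distrib_left)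
  also have "\<dots> \<le> (\<Sum>x\<in>A. c x * (real (count P x) * f))"
    by (intro sum_mono mult_left_mono count_combos_le assms(2))
  also have "\<dots> = f * (\<Sum>x\<in>A. c x * real (count P x))"
    by (simp add: sum_distrib_left algebra_simps)
  also have "\<dots> \<le> f"
    using not_gt f_gt_12 by (simp add: mult_left_le)
  finally show False using f_lt_card_W by simp
qed

lemma count_P_gt:
  assumes "0 < k" "\<And>M. M \<in> S \<Longrightarrow> k \<le> count M x"
  shows "k < count P x"
proof -
  have "1 < (\<Sum>y\<in>{x}. 1 / real k * real (count P y))"
    by (rule weighted_count_P_gt_1) (use assms in \<open>auto simp: field_simps\<close>)
  then show ?thesis using assms(1) by (simp add: field_simps)
qed

lemma mem_P_if_mem_combo:
  assumes "M \<in> S" "x \<in># M"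
  shows "x \<in># P"
proof -
  obtain w where "w \<in> W" "M = m w" using assms(1) combos_eq by blast
  then have "real (count M x) \<le> (\<Sum>w\<in>W. real (count (m w) x))"
    using finite_W by (auto intro: member_le_sum)
  also have "\<dots> \<le> real (count P x) * f" by (rule count_combos_le)
  finally have "real (count M x) \<le> real (count P x) * f" .
  moreover have "0 < real (count M x)" using assms(2) by simp
  ultimately have "0 < real (count P x) * f" by linarith
  then show ?thesis using f_gt_12 by (simp add: zero_less_mult_iff)
qed

lemma classification_if_aaa:
  assumes S: "S = {{#a, a, a#}}"
  shows "tiling_classification S P"
proof -
  have "3 < count P a" by (rule count_P_gt) (auto simp: S)
  then have "{#a, a, a, a#} \<subseteq># P" by (simp add: subseteq_mset_def)
  then obtain d where P: "P = add_mset d {#a, a, a, a#}"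
    using size_P by (elim obtain_add_mset_if_subseteq) simp_all
  have "d \<noteq> a"
  proof
    assume "d = a"
    then have "5 * a = 3 * pi + 4 * pi / f" using P sum_P by simp
    moreover have "3 * a = 2 * pi" using sum_triple_combo[of a a a] S by simp
    ultimately have "pi / 3 = 4 * pi / f" by simp
    then have "f = 12" using f_gt_12 by (simp add: field_simps)
    then show False using f_gt_12 by simp
  qed
  with S show ?thesis using P by (rule classification_aaa)
qed

lemma classification_if_abb:
  assumes S: "S = {{#a, b, b#}}" and "a \<noteq> b"
  shows "tiling_classification S P"
proof -
  have "1 < count P a" by (rule count_P_gt) (auto simp: S)
  moreover have "2 < count P b" by (rule count_P_gt) (use \<open>a \<noteq> b\<close> in \<open>auto simp: S\<close>)
  ultimately have "{#a, a, b, b, b#} \<subseteq># P" using \<open>a \<noteq> b\<close> by (auto simp: subseteq_mset_def)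
  then have "P = {#a, a, b, b, b#}" using size_P by (intro subseteq_mset_size_eq_imp_eq) simp_all
  then show ?thesis using S \<open>a \<noteq> b\<close> by (intro classification_abb)
qed

lemma not_single_distinct_triple:
  assumes "distinct [a, b, c]"
  shows "S \<noteq> {{#a, b, c#}}"
proof
  assume S: "S = {{#a, b, c#}}"
  have "1 < count P a" "1 < count P b" "1 < count P c"
    by (rule count_P_gt; simp add: S)+
  then have "{#a, a, b, b, c, c#} \<subseteq># P" using assms by (auto simp: subseteq_mset_def)
  from size_mset_mono[OF this] show False using size_P by simp
qed

lemma classification_if_abc_aaa:
  assumes S: "S = {{#a, b, c#}, {#a, a, a#}}" and "distinct [a, b, c]"
  shows "tiling_classification S P"
proof -
  have "1 < count P a" by (rule count_P_gt) (auto simp: S)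
  moreover have "b \<in># P" "c \<in># P" by (rule mem_P_if_mem_combo[of "{#a, b, c#}"]; simp add: S)+
  ultimately have "{#a, a, b, c#} \<subseteq># P" using \<open>distinct [a, b, c]\<close> by (auto simp: subseteq_mset_def)
  then obtain d where "P = add_mset d {#a, a, b, c#}"
    using size_P by (elim obtain_add_mset_if_subseteq) simp_all
  with S \<open>distinct [a, b, c]\<close> show ?thesis by (rule classification_abc_aaa)
qed

lemma classification_if_abb_aac:
  assumes S: "S = {{#a, b, b#}, {#a, a, c#}}" and "distinct [a, b, c]"
  shows "tiling_classification S P"
proof -
  have "1 < count P a" by (rule count_P_gt) (auto simp: S)
  moreover have "b \<in># P" by (rule mem_P_if_mem_combo[of "{#a, b, b#}"]) (simp_all add: S)
  moreover have "c \<in># P" by (rule mem_P_if_mem_combo[of "{#a, a, c#}"]) (simp_all add: S)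
  ultimately have "{#a, a, b, c#} \<subseteq># P" using \<open>distinct [a, b, c]\<close> by (auto simp: subseteq_mset_def)
  then obtain d where "P = add_mset d {#a, a, b, c#}"
    using size_P by (elim obtain_add_mset_if_subseteq) simp_all
  with S \<open>distinct [a, b, c]\<close> show ?thesis by (rule classification_abb_aac)
qed

lemma classification_if_abb_ccc:
  assumes S: "S = {{#a, b, b#}, {#c, c, c#}}" and distinct: "distinct [a, b, c]"
  shows "tiling_classification S P"
proof -
  \<comment> \<open>both vertex types have weight exactly 1\<close>
  have "1 < (\<Sum>x\<in>{b, c}. (if x = b then 1 / 2 else 1 / 3) * real (count P x))"
    by (rule weighted_count_P_gt_1) (use distinct in \<open>auto simp: S\<close>)
  then have "2 \<le> count P b \<or> 2 \<le> count P c" using distinct by auto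
  moreover have "a \<in># P" "b \<in># P" by (rule mem_P_if_mem_combo[of "{#a, b, b#}"]; simp add: S)+
  moreover have "c \<in># P" by (rule mem_P_if_mem_combo[of "{#c, c, c#}"]) (simp_all add: S)
  ultimately have "{#a, b, b, c#} \<subseteq># P \<or> {#a, b, c, c#} \<subseteq># P"
    using distinct by (auto simp: subseteq_mset_def)
  then obtain d where "P = add_mset d {#a, b, b, c#} \<or> P = add_mset d {#a, b, c, c#}"
    using size_P by (elim disjE obtain_add_mset_if_subseteq) auto
  with S distinct show ?thesis by (rule classification_abb_ccc)
qed

theorem classification: "tiling_classification S P"
proof (cases rule: combos_cases)
  case (aaa a)
  then show ?thesis by (rule classification_if_aaa)
next
  case (abb a b)
  then show ?thesis by (intro classification_if_abb)
next
  case (abc a b c)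
  then show ?thesis using not_single_distinct_triple by blast
next
  case (abc_aaa a b c)
  then show ?thesis by (intro classification_if_abc_aaa)
next
  case (abb_aac a b c)
  then show ?thesis by (intro classification_if_abb_aac)
next
  case (abb_ccc a b c)
  then show ?thesis by (intro classification_if_abb_ccc)
qed

end

section \<open>Pentagonal tilings as combinatorial maps\<close>

lemma orb_eq_orbit:
  assumes "g permutes D" "finite D"
  shows "orb g d = orbit g d"
proof -
  have "permutation g" using assms permutation_permutes by blast
  then show ?thesis unfolding orb_def by (simp add: orbit_altdef_permutation)
qed

lemma self_in_orb: "d \<in> orb g d"
  unfolding orb_def by (auto intro: exI[of _ 0])

lemma orb_subset:
  assumes "g permutes D" "finite D" "d \<in> D"
  shows "orb g d \<subseteq> D"
  using permutes_orbit_subset[OF assms(1,3)] orb_eq_orbit[OF assms(1,2)] by simp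

lemma orb_eq_if_mem:
  assumes "g permutes D" "finite D" "e \<in> orb g d"
  shows "orb g e = orb g d"
  using orbit_cyclic_eq3[OF cyclic_on_orbit[OF assms(1,2)]] assms(3)
  unfolding orb_eq_orbit[OF assms(1,2)] by blast

lemma sum_over_orbs:
  assumes "g permutes D" "finite D"
  shows "(\<Sum>Q\<in>orb g ` D. sum h Q) = sum h D"
proof -
  have "{d \<in> D. orb g d = Q} = Q" if Q: "Q \<in> orb g ` D" for Q
  proof -
    obtain e where e: "e \<in> D" "Q = orb g e" using Q by blast
    have "d \<in> Q" if "orb g d = Q" for d using self_in_orb that by metis
    moreover have "d \<in> D \<and> orb g d = Q" if "d \<in> Q" for d
      using orb_subset[OF assms e(1)] orb_eq_if_mem[OF assms] that e(2) by blast
    ultimately show ?thesis by blast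
  qed
  then have "(\<Sum>Q\<in>orb g ` D. sum h Q) = (\<Sum>Q\<in>orb g ` D. sum h {d \<in> D. orb g d = Q})"
    by (intro sum.cong) auto
  also have "\<dots> = sum h D" using assms(2) by (intro sum.group) auto
  finally show ?thesis .
qed

lemma card_eq_sum_card_orbs:
  assumes "g permutes D" "finite D"
  shows "card D = (\<Sum>Q\<in>orb g ` D. card Q)"
proof -
  have "card D = (\<Sum>d\<in>D. 1)" by simp
  also have "\<dots> = (\<Sum>Q\<in>orb g ` D. \<Sum>d\<in>Q. 1)" by (rule sum_over_orbs[OF assms, symmetric])
  also have "\<dots> = (\<Sum>Q\<in>orb g ` D. card Q)" by simp
  finally show ?thesis .
qed

lemma orb_involution:
  assumes "ep (ep d) = d"
  shows "orb ep d = {d, ep d}"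
proof
  have "(ep ^^ n) d \<in> {d, ep d}" for n using assms by (induction n) auto
  then show "orb ep d \<subseteq> {d, ep d}" unfolding orb_def by auto
  have "ep d = (ep ^^ 1) d" by simp
  then have "ep d \<in> orb ep d" unfolding orb_def by blast
  then show "{d, ep d} \<subseteq> orb ep d" by (simp add: self_in_orb)
qed

lemma count_image_mset_mset_set:
  "finite A \<Longrightarrow> count (image_mset h (mset_set A)) x = (\<Sum>a\<in>A. if h a = x then 1 else 0)"
  by (induction A rule: finite_induct) auto

definition deg3_vertices :: "'d set \<Rightarrow> ('d \<Rightarrow> 'd) \<Rightarrow> 'd set set" where
  "deg3_vertices D sg = {v \<in> map_vertices D sg. card v = 3}"

context
  fixes D :: "'d set" and sg ep :: "'d \<Rightarrow> 'd"
  assumes tiling: "sphere_pentagon_tiling D sg ep"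
begin

lemma tiling_finite: "finite D"
  and tiling_permutes: "sg permutes D" "ep permutes D" "(sg \<circ> ep) permutes D"
proof -
  show "finite D" "sg permutes D" "ep permutes D"
    using tiling unfolding sphere_pentagon_tiling_def by simp_all
  then show "(sg \<circ> ep) permutes D" by (simp add: permutes_compose)
qed

lemma finite_vertices: "finite (map_vertices D sg)"
  using tiling_finite unfolding map_vertices_def by simp

lemma finite_vertex: "v \<in> map_vertices D sg \<Longrightarrow> finite v"
  unfolding map_vertices_def
  using finite_subset[OF orb_subset[OF tiling_permutes(1) tiling_finite] tiling_finite] by blast

lemma finite_face: "Q \<in> map_faces D sg ep \<Longrightarrow> finite Q"
  unfolding map_faces_def
  using finite_subset[OF orb_subset[OF tiling_permutes(3) tiling_finite] tiling_finite] by blast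

lemma sum_over_faces: "(\<Sum>Q\<in>map_faces D sg ep. sum h Q) = sum h D"
  using sum_over_orbs[OF tiling_permutes(3) tiling_finite] unfolding map_faces_def .

lemma sum_over_vertices: "(\<Sum>v\<in>map_vertices D sg. sum h v) = sum h D"
  using sum_over_orbs[OF tiling_permutes(1) tiling_finite] unfolding map_vertices_def .

lemma card_darts_faces: "card D = 5 * card (map_faces D sg ep)"
proof -
  have "card D = (\<Sum>Q\<in>map_faces D sg ep. card Q)"
    using card_eq_sum_card_orbs[OF tiling_permutes(3) tiling_finite] unfolding map_faces_def .
  also have "\<dots> = (\<Sum>Q\<in>map_faces D sg ep. 5)"
    using tiling unfolding sphere_pentagon_tiling_def map_faces_def by (intro sum.cong) auto
  finally show ?thesis by simp
qed

lemma card_darts_edges: "card D = 2 * card (map_edges D ep)"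
proof -
  have "card D = (\<Sum>Q\<in>map_edges D ep. card Q)"
    using card_eq_sum_card_orbs[OF tiling_permutes(2) tiling_finite] unfolding map_edges_def .
  also have "\<dots> = (\<Sum>Q\<in>map_edges D ep. 2)"
  proof (rule sum.cong)
    fix Q assume "Q \<in> map_edges D ep"
    then obtain d where "d \<in> D" "Q = orb ep d" unfolding map_edges_def by blast
    moreover have "ep d \<noteq> d \<and> ep (ep d) = d"
      using tiling \<open>d \<in> D\<close> unfolding sphere_pentagon_tiling_def by blast
    ultimately show "card Q = 2" using orb_involution[of ep d] by auto
  qed simp
  finally show ?thesis by simp
qed

lemma card_darts_vertices: "card D = (\<Sum>v\<in>map_vertices D sg. card v)"
  using card_eq_sum_card_orbs[OF tiling_permutes(1) tiling_finite] unfolding map_vertices_def .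

lemma card_vertices: "2 * card (map_vertices D sg) = 3 * card (map_faces D sg ep) + 4"
  using tiling card_darts_faces card_darts_edges unfolding sphere_pentagon_tiling_def by linarith

lemma card_deg3_vertices: "card (map_faces D sg ep) + 8 \<le> card (deg3_vertices D sg)"
proof -
  let ?V = "map_vertices D sg"
  have "card (deg3_vertices D sg) = (\<Sum>v\<in>deg3_vertices D sg. 1)" by simp
  also have "\<dots> = (\<Sum>v\<in>?V. if card v = 3 then 1 else 0)"
    unfolding deg3_vertices_def by (rule sum.inter_filter[OF finite_vertices])
  finally have deg3: "card (deg3_vertices D sg) = (\<Sum>v\<in>?V. if card v = 3 then 1 else 0)" .
  have "(\<Sum>v\<in>?V. 4) \<le> (\<Sum>v\<in>?V. card v + (if card v = 3 then 1 else 0))"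
  proof (rule sum_mono)
    fix v assume "v \<in> ?V"
    then have "3 \<le> card v" using tiling unfolding sphere_pentagon_tiling_def map_vertices_def by auto
    then show "4 \<le> card v + (if card v = 3 then 1 else 0)" by auto
  qed
  then have "4 * card ?V \<le> card D + card (deg3_vertices D sg)"
    using card_darts_vertices deg3 by (simp add: sum.distrib)
  then show ?thesis using card_vertices card_darts_faces by linarith
qed

end

definition vertex_angles :: "('d \<Rightarrow> real) \<Rightarrow> 'd set \<Rightarrow> real multiset" where
  "vertex_angles th v = image_mset th (mset_set v)"

context
  fixes D :: "'d set" and sg ep :: "'d \<Rightarrow> 'd" and th :: "'d \<Rightarrow> real" and P :: "real multiset"
  assumes congruent: "angle_congruent D sg ep th P"
begin

lemma congruent_tiling: "sphere_pentagon_tiling D sg ep"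
  using congruent unfolding angle_congruent_def by blast

lemma face_angles: "Q \<in> map_faces D sg ep \<Longrightarrow> vertex_angles th Q = P"
  using congruent unfolding angle_congruent_def vertex_angles_def by blast

lemma size_angles: "size P = 5"
proof -
  obtain d where "d \<in> D" using congruent_tiling unfolding sphere_pentagon_tiling_def by blast
  then have "orb (sg \<circ> ep) d \<in> map_faces D sg ep" "card (orb (sg \<circ> ep) d) = 5"
    using congruent_tiling unfolding sphere_pentagon_tiling_def map_faces_def by auto
  then show ?thesis using face_angles unfolding vertex_angles_def by force
qed

lemma sum_angles: "sum_mset P = 3 * pi + 4 * pi / card (map_faces D sg ep)"
proof -
  let ?F = "map_faces D sg ep" and ?V = "map_vertices D sg"
  have "real (card ?F) * sum_mset P = (\<Sum>Q\<in>?F. sum th Q)"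
    using face_angles finite_face[OF congruent_tiling]
    by (simp add: vertex_angles_def sum_unfold_sum_mset)
  also have "\<dots> = sum th D" by (rule sum_over_faces[OF congruent_tiling])
  also have "\<dots> = (\<Sum>v\<in>?V. sum th v)" by (rule sum_over_vertices[OF congruent_tiling, symmetric])
  also have "\<dots> = real (card ?V) * (2 * pi)"
    using congruent unfolding angle_congruent_def by simp
  also have "\<dots> = (3 * real (card ?F) + 4) * pi"
    using arg_cong[OF card_vertices[OF congruent_tiling], of real] by (simp add: algebra_simps)
  finally have "real (card ?F) * sum_mset P = (3 * real (card ?F) + 4) * pi" .
  moreover have "card ?F \<noteq> 0"
    using card_darts_faces[OF congruent_tiling] congruent_tiling
    unfolding sphere_pentagon_tiling_def by auto
  ultimately show ?thesis by (simp add: field_simps)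
qed

lemma count_deg3_angles:
  "(\<Sum>v\<in>deg3_vertices D sg. count (vertex_angles th v) x) \<le> count P x * card (map_faces D sg ep)"
proof -
  let ?h = "\<lambda>d. if th d = x then 1 else (0::nat)"
  have count_eq: "count (vertex_angles th A) x = sum ?h A" if "finite A" for A
    using that unfolding vertex_angles_def by (rule count_image_mset_mset_set)
  have "(\<Sum>v\<in>deg3_vertices D sg. count (vertex_angles th v) x)
      = (\<Sum>v\<in>deg3_vertices D sg. sum ?h v)"
    using count_eq finite_vertex[OF congruent_tiling] unfolding deg3_vertices_def by simp
  also have "\<dots> \<le> (\<Sum>v\<in>map_vertices D sg. sum ?h v)"
    using finite_vertices[OF congruent_tiling] unfolding deg3_vertices_def by (intro sum_mono2) auto
  also have "\<dots> = sum ?h D" by (rule sum_over_vertices[OF congruent_tiling])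
  also have "\<dots> = (\<Sum>Q\<in>map_faces D sg ep. sum ?h Q)"
    by (rule sum_over_faces[OF congruent_tiling, symmetric])
  also have "\<dots> = (\<Sum>Q\<in>map_faces D sg ep. count P x)"
  proof (rule sum.cong)
    fix Q assume Q: "Q \<in> map_faces D sg ep"
    show "sum ?h Q = count P x"
      using count_eq[OF finite_face[OF congruent_tiling Q]] face_angles[OF Q] by simp
  qed simp
  finally show ?thesis by (simp add: mult.commute)
qed

lemma angle_congruent_deg3_counting:
  assumes "12 < card (map_faces D sg ep)"
    and "card (\<Union>M\<in>deg3_combos D sg th. set_mset M) \<le> 3"
  shows "deg3_counting (deg3_combos D sg th) (deg3_vertices D sg) (vertex_angles th) P
    (card (map_faces D sg ep))"
proof unfold_locales
  show combos: "deg3_combos D sg th = vertex_angles th ` deg3_vertices D sg"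
    unfolding deg3_combos_def deg3_vertices_def vertex_angles_def ..
  show "finite (deg3_vertices D sg)"
    using finite_vertices[OF congruent_tiling] unfolding deg3_vertices_def by simp
  then show "finite (deg3_combos D sg th)" using combos by simp
  have "card (map_faces D sg ep) < card (deg3_vertices D sg)"
    using card_deg3_vertices[OF congruent_tiling] by simp
  then show "real (card (map_faces D sg ep)) < real (card (deg3_vertices D sg))" by simp
  then show "deg3_combos D sg th \<noteq> {}" using combos by auto
  show "size M = 3" "sum_mset M = 2 * pi" if "M \<in> deg3_combos D sg th" for M
    using that congruent finite_vertex[OF congruent_tiling]
    unfolding combos deg3_vertices_def vertex_angles_def angle_congruent_def
    by (auto simp: sum_unfold_sum_mset)
  show "(\<Sum>v\<in>deg3_vertices D sg. real (count (vertex_angles th v) x))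
    \<le> real (count P x) * real (card (map_faces D sg ep))" for x
    using count_deg3_angles[of x] by (simp flip: of_nat_sum of_nat_mult)
qed (use assms size_angles sum_angles in auto)

end

theorem proposition5:
  fixes D :: "'d set" and sg ep :: "'d \<Rightarrow> 'd" and th :: "'d \<Rightarrow> real"
    and P :: "real multiset"
  assumes tiling: "angle_congruent D sg ep th P"
    and many: "card (map_faces D sg ep) > 12"
    and three: "card (\<Union>M\<in>deg3_combos D sg th. set_mset M) \<le> 3"
  shows "\<exists>a b c d :: real. distinct [a, b, c, d] \<and>
    (let S = deg3_combos D sg th in
      (S = {{#a, a, a#}} \<and> P = {#a, a, a, a, b#}) \<or>
      (S = {{#a, b, b#}} \<and>
         (P = {#a, a, b, b, b#} \<or> P = {#a, a, a, b, b#} \<or> P = {#a, a, b, b, c#})) \<or>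
      (S = {{#a, b, c#}, {#a, a, a#}} \<and>
         (P = {#a, a, a, b, c#} \<or> P = {#a, a, b, b, c#} \<or> P = {#a, a, b, c, d#})) \<or>
      (S = {{#a, b, b#}, {#a, a, c#}} \<and>
         (P = {#a, a, a, b, c#} \<or> P = {#a, a, b, b, c#} \<or> P = {#a, a, b, c, c#} \<or>
          P = {#a, a, b, c, d#})) \<or>
      (S = {{#a, b, b#}, {#c, c, c#}} \<and>
         (P = {#a, a, b, b, c#} \<or> P = {#a, a, b, c, c#} \<or> P = {#a, b, b, b, c#} \<or>
          P = {#a, b, b, c, c#} \<or> P = {#a, b, c, c, c#} \<or>
          P = {#a, b, b, c, d#} \<or> P = {#a, b, c, c, d#})))"
proof -
  have "deg3_counting (deg3_combos D sg th) (deg3_vertices D sg) (vertex_angles th) P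
      (card (map_faces D sg ep))"
    using tiling many three by (rule angle_congruent_deg3_counting)
  then have "tiling_classification (deg3_combos D sg th) P"
    by (rule deg3_counting.classification)
  then show ?thesis unfolding tiling_classification_def Let_def .
qed

end
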